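(* Let $L$ be a simple Lie algebra over a field $k$ generated by its pure extremal elements, let $x,y\in E$ with $g(x,y)=1$ and let $L=\bigoplus_{i=-2}^2L_i$ be the associated $5$-grading. For $i\in\{-1,1\}$ let $Z_i=\{z\in L_i:[z,L_i]=0\}$. Then $Z_{-1}=Z_1=0$.
   Context: A nonzero $a\in L$ is extremal if there is $g_a\colon L\to k$ with $[a,[a,u]]=2g_a(u)a$, $[[a,u],[a,w]]=g_a([u,w])a+g_a(w)[a,u]-g_a(u)[a,w]$, $[a,[u,[a,w]]]=g_a([u,w])a-g_a(w)[a,u]-g_a(u)[a,w]$ for all $u,w$; sandwiches satisfy $[a,[a,u]]=0=[a,[u,[a,w]]]$; pure = non-sandwich; $E$ = set of extremal elements; $g$ = unique symmetric bilinear form with $g(a,u)=g_a(u)$ for $a\in E$. The $5$-grading associated with $x,y$: $L_{-2}=kx$, $L_{-1}=[x,U]$, $L_0=\{l:[x,l]\in kx,[y,l]\in ky\}$, $L_1=[y,U]$, $L_2=ky$, $U=\{u:g(u,x)=g(u,y)=g(u,[x,y])=0\}$. *)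

theory Defs
  imports Complex_Main
begin

definition lie_algebra :: "('k::field \<Rightarrow> 'L::ab_group_add \<Rightarrow> 'L) \<Rightarrow> ('L \<Rightarrow> 'L \<Rightarrow> 'L) \<Rightarrow> bool" where
  "lie_algebra scale br \<longleftrightarrow>
     vector_space scale \<and>
     (\<forall>x y z. br (x + y) z = br x z + br y z) \<and>
     (\<forall>x y z. br x (y + z) = br x y + br x z) \<and>
     (\<forall>c x y. br (scale c x) y = scale c (br x y)) \<and>
     (\<forall>c x y. br x (scale c y) = scale c (br x y)) \<and>
     (\<forall>x. br x x = 0) \<and>
     (\<forall>x y z. br x (br y z) + br y (br z x) + br z (br x y) = 0)"

definition lie_ideal :: "('k::field \<Rightarrow> 'L::ab_group_add \<Rightarrow> 'L) \<Rightarrow> ('L \<Rightarrow> 'L \<Rightarrow> 'L) \<Rightarrow> 'L set \<Rightarrow> bool" where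
  "lie_ideal scale br I \<longleftrightarrow> module.subspace scale I \<and> (\<forall>u. \<forall>x\<in>I. br u x \<in> I)"

definition lie_subalgebra :: "('k::field \<Rightarrow> 'L::ab_group_add \<Rightarrow> 'L) \<Rightarrow> ('L \<Rightarrow> 'L \<Rightarrow> 'L) \<Rightarrow> 'L set \<Rightarrow> bool" where
  "lie_subalgebra scale br S \<longleftrightarrow> module.subspace scale S \<and> (\<forall>x\<in>S. \<forall>y\<in>S. br x y \<in> S)"

definition simple_lie_algebra :: "('k::field \<Rightarrow> 'L::ab_group_add \<Rightarrow> 'L) \<Rightarrow> ('L \<Rightarrow> 'L \<Rightarrow> 'L) \<Rightarrow> bool" where
  "simple_lie_algebra scale br \<longleftrightarrow> lie_algebra scale br \<and>
     (\<exists>x y. br x y \<noteq> 0) \<and>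
     (\<forall>I. lie_ideal scale br I \<longrightarrow> I = {0} \<or> I = UNIV)"

definition lie_generated_by :: "('k::field \<Rightarrow> 'L::ab_group_add \<Rightarrow> 'L) \<Rightarrow> ('L \<Rightarrow> 'L \<Rightarrow> 'L) \<Rightarrow> 'L set \<Rightarrow> bool" where
  "lie_generated_by scale br X \<longleftrightarrow> (\<forall>S. lie_subalgebra scale br S \<and> X \<subseteq> S \<longrightarrow> S = UNIV)"

definition extremal_ids :: "('k::field \<Rightarrow> 'L::ab_group_add \<Rightarrow> 'L) \<Rightarrow> ('L \<Rightarrow> 'L \<Rightarrow> 'L) \<Rightarrow> 'L \<Rightarrow> ('L \<Rightarrow> 'k) \<Rightarrow> bool" where
  "extremal_ids scale br a ga \<longleftrightarrow>
     (\<forall>u. br a (br a u) = scale (2 * ga u) a) \<and>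
     (\<forall>u w. br (br a u) (br a w) = scale (ga (br u w)) a + scale (ga w) (br a u) - scale (ga u) (br a w)) \<and>
     (\<forall>u w. br a (br u (br a w)) = scale (ga (br u w)) a - scale (ga w) (br a u) - scale (ga u) (br a w))"

definition extremal :: "('k::field \<Rightarrow> 'L::ab_group_add \<Rightarrow> 'L) \<Rightarrow> ('L \<Rightarrow> 'L \<Rightarrow> 'L) \<Rightarrow> 'L \<Rightarrow> bool" where
  "extremal scale br a \<longleftrightarrow> a \<noteq> 0 \<and> (\<exists>ga. extremal_ids scale br a ga)"

definition sandwich :: "('L::ab_group_add \<Rightarrow> 'L \<Rightarrow> 'L) \<Rightarrow> 'L \<Rightarrow> bool" where
  "sandwich br a \<longleftrightarrow> (\<forall>u. br a (br a u) = 0) \<and> (\<forall>u w. br a (br u (br a w)) = 0)"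

definition pure_extremal :: "('k::field \<Rightarrow> 'L::ab_group_add \<Rightarrow> 'L) \<Rightarrow> ('L \<Rightarrow> 'L \<Rightarrow> 'L) \<Rightarrow> 'L \<Rightarrow> bool" where
  "pure_extremal scale br a \<longleftrightarrow> extremal scale br a \<and> \<not> sandwich br a"

definition extremal_form :: "('k::field \<Rightarrow> 'L::ab_group_add \<Rightarrow> 'L) \<Rightarrow> ('L \<Rightarrow> 'L \<Rightarrow> 'L) \<Rightarrow> ('L \<Rightarrow> 'L \<Rightarrow> 'k) \<Rightarrow> bool" where
  "extremal_form scale br g \<longleftrightarrow>
     (\<forall>u v. g u v = g v u) \<and>
     (\<forall>u v w. g (u + v) w = g u w + g v w) \<and>
     (\<forall>c u w. g (scale c u) w = c * g u w) \<and>
     (\<forall>a. extremal scale br a \<longrightarrow> extremal_ids scale br a (g a))"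

definition grading_U :: "('L::ab_group_add \<Rightarrow> 'L \<Rightarrow> 'k::field) \<Rightarrow> ('L \<Rightarrow> 'L \<Rightarrow> 'L) \<Rightarrow> 'L \<Rightarrow> 'L \<Rightarrow> 'L set" where
  "grading_U g br x y = {u. g u x = 0 \<and> g u y = 0 \<and> g u (br x y) = 0}"

definition L_minus1 :: "('L::ab_group_add \<Rightarrow> 'L \<Rightarrow> 'k::field) \<Rightarrow> ('L \<Rightarrow> 'L \<Rightarrow> 'L) \<Rightarrow> 'L \<Rightarrow> 'L \<Rightarrow> 'L set" where
  "L_minus1 g br x y = br x ` grading_U g br x y"

definition L_plus1 :: "('L::ab_group_add \<Rightarrow> 'L \<Rightarrow> 'k::field) \<Rightarrow> ('L \<Rightarrow> 'L \<Rightarrow> 'L) \<Rightarrow> 'L \<Rightarrow> 'L \<Rightarrow> 'L set" where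
  "L_plus1 g br x y = br y ` grading_U g br x y"

definition centre_part :: "('L::ab_group_add \<Rightarrow> 'L \<Rightarrow> 'L) \<Rightarrow> 'L set \<Rightarrow> 'L set" where
  "centre_part br Li = {z \<in> Li. \<forall>w\<in>Li. br z w = 0}"

end

theory Submission
  imports Defs
begin

text \<open>
  For an extremal element e the map exp(ad e) = 1 + ad e + g(e,-) e is an automorphism of L
  that maps pure extremal elements to pure extremal elements. Since the functional g_c of a
  pure extremal element c is unique, transporting g along these automorphisms gives the
  invariance g(a,[e,r]) = -g([e,a],r) for pure a and extremal e. Consequently the vectors
  orthogonal to all pure extremal elements form an ideal, which vanishes because L is simple
  and generated by pure extremal elements. Also, x is pure: a sandwich x with g(x,y) = 1 would
  force ad x and ad y to preserve span {x, y, [x,y]}, making L three-dimensional with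
  [x,y] central.

  Now let u \<in> U with [x,u] central in L_{-1}. The extremal identity for [[x,u],[x,w]] shows
  that g(x,[-,u]) vanishes on U, the common kernel of g(x,-), g(y,-) and g([x,y],-), so it is
  a combination of these; evaluating at x and y leaves g(x,[w,u]) = \<gamma> g([x,y],w). By
  invariance [x,u] + \<gamma>[x,y] is orthogonal to all pure extremal elements, hence zero. Then
  u + \<gamma>y centralizes x, so \<gamma> = g(x, u + \<gamma>y) = 0. Swapping x and y gives Z_1 = 0.
\<close>

lemma vector_space_field_mult: "vector_space ((*) :: 'a::field \<Rightarrow> 'a \<Rightarrow> 'a)"
  by unfold_locales (simp_all add: algebra_simps)

context vector_space
begin

interpretation functionals: vector_space_pair scale "(*) :: 'a \<Rightarrow> 'a \<Rightarrow> 'a"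
  by (intro vector_space_pair.intro vector_space_axioms vector_space_field_mult)

lemma eq_scale_divide:
  assumes "k \<noteq> 0" and "scale k p = scale m q"
  shows "p = scale (m / k) q"
proof -
  have "p = scale (inverse k) (scale k p)" using assms(1) by simp
  also have "\<dots> = scale (m / k) q" using assms(2) by (simp add: divide_inverse mult.commute)
  finally show ?thesis .
qed

lemma linear_functional_proportional_on:
  assumes Q: "subspace Q"
    and f: "Vector_Spaces.linear scale (*) f" and p: "Vector_Spaces.linear scale (*) p"
    and vanish: "\<And>w. w \<in> Q \<Longrightarrow> f w = 0 \<Longrightarrow> p w = 0"
  obtains c where "\<And>w. w \<in> Q \<Longrightarrow> p w = c * f w"
proof (cases "\<exists>w0\<in>Q. f w0 \<noteq> 0")
  case True
  then obtain w0 where w0: "w0 \<in> Q" "f w0 \<noteq> 0" by blast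
  show ?thesis
  proof (rule that[of "p w0 / f w0"])
    fix w assume "w \<in> Q"
    let ?w' = "w - scale (f w / f w0) w0"
    have "?w' \<in> Q" using Q \<open>w \<in> Q\<close> w0(1) by (simp add: subspace_diff subspace_scale)
    moreover have "f ?w' = 0"
      using w0(2) by (simp add: functionals.linear_diff[OF f] functionals.linear_scale[OF f])
    ultimately have "p ?w' = 0" by (rule vanish)
    then show "p w = p w0 / f w0 * f w"
      using w0(2) by (simp add: functionals.linear_diff[OF p] functionals.linear_scale[OF p] field_simps)
  qed
next
  case False
  then show ?thesis using vanish by (intro that[of 0]) auto
qed

lemma linear_functional_in_span_of_three:
  assumes f1: "Vector_Spaces.linear scale (*) f1" and f2: "Vector_Spaces.linear scale (*) f2"
    and f3: "Vector_Spaces.linear scale (*) f3"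
    and p: "Vector_Spaces.linear scale (*) p"
    and vanish: "\<And>w. f1 w = 0 \<Longrightarrow> f2 w = 0 \<Longrightarrow> f3 w = 0 \<Longrightarrow> p w = 0"
  obtains c1 c2 c3 where "\<And>w. p w = c1 * f1 w + c2 * f2 w + c3 * f3 w"
proof -
  note kernel = functionals.linear_subspace_kernel
  note minus_multiple = functionals.linear_compose_sub[OF _ functionals.linear_compose_scale_right]
  obtain c3 where c3: "\<And>w. w \<in> {w. f1 w = 0} \<inter> {w. f2 w = 0} \<Longrightarrow> p w = c3 * f3 w"
    by (rule linear_functional_proportional_on[OF subspace_inter[OF kernel[OF f1] kernel[OF f2]] f3 p])
      (auto intro: vanish)
  obtain c2 where c2: "\<And>w. w \<in> {w. f1 w = 0} \<Longrightarrow> p w - c3 * f3 w = c2 * f2 w"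
    by (rule linear_functional_proportional_on[OF kernel[OF f1] f2 minus_multiple[OF p f3]])
      (use c3 in auto)
  obtain c1 where "\<And>w. w \<in> UNIV \<Longrightarrow> p w - c3 * f3 w - c2 * f2 w = c1 * f1 w"
    by (rule linear_functional_proportional_on[OF subspace_UNIV f1
          minus_multiple[OF minus_multiple[OF p f3] f2]])
      (use c2 in auto)
  then show ?thesis by (intro that[of c1 c2 c3]) (simp add: algebra_simps)
qed

end

locale lie_alg =
  fixes scale :: "'k::field \<Rightarrow> 'L::ab_group_add \<Rightarrow> 'L"
    and br :: "'L \<Rightarrow> 'L \<Rightarrow> 'L"
  assumes lie_algebra: "lie_algebra scale br"
begin

sublocale V: vector_space scale
  using lie_algebra by (simp add: lie_algebra_def)

lemma br_add_left: "br (a + b) c = br a c + br b c"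
  and br_add_right: "br a (b + c) = br a b + br a c"
  and br_scale_left: "br (scale k a) b = scale k (br a b)"
  and br_scale_right: "br a (scale k b) = scale k (br a b)"
  and br_self: "br a a = 0"
  and br_jacobi: "br a (br b c) + br b (br c a) + br c (br a b) = 0"
  using lie_algebra unfolding lie_algebra_def by simp_all

lemma br_zero_left [simp]: "br 0 a = 0"
  using br_add_left[of 0 0 a] by simp

lemma br_zero_right [simp]: "br a 0 = 0"
  using br_add_right[of a 0 0] by simp

lemma br_minus_left: "br (- a) b = - br a b"
  using br_add_left[of a "- a" b] by (simp add: eq_neg_iff_add_eq_0 add.commute)

lemma br_minus_right: "br a (- b) = - br a b"
  using br_add_right[of a b "- b"] by (simp add: eq_neg_iff_add_eq_0 add.commute)

lemma br_diff_left: "br (a - b) c = br a c - br b c"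
  using br_add_left[of a "- b" c] by (simp add: br_minus_left)

lemma br_diff_right: "br a (b - c) = br a b - br a c"
  using br_add_right[of a b "- c"] by (simp add: br_minus_right)

lemmas br_bilinear = br_add_left br_add_right br_scale_left br_scale_right
  br_minus_left br_minus_right br_diff_left br_diff_right br_self

lemma br_anticomm: "br b a = - br a b"
proof -
  have "br a b + br b a = br (a + b) (a + b) - br a a - br b b"
    by (simp add: br_add_left br_add_right)
  also have "\<dots> = 0" by (simp add: br_self)
  finally show ?thesis by (metis add.commute eq_neg_iff_add_eq_0)
qed

lemma br_derivation: "br e (br a b) = br (br e a) b + br a (br e b)"
  using br_jacobi[of e a b] br_anticomm[of b e] br_anticomm[of "br e a" b]
  by (simp add: br_minus_right algebra_simps)

lemma subspace_br_preimage: "V.subspace T \<Longrightarrow> V.subspace {v. br u v \<in> T}"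
  unfolding V.subspace_def by (simp add: br_add_right br_scale_right)

lemma lie_ideal_span:
  assumes "\<And>u s. s \<in> S \<Longrightarrow> br u s \<in> V.span S"
  shows "lie_ideal scale br (V.span S)"
  unfolding lie_ideal_def
proof (intro conjI allI ballI)
  fix u v assume "v \<in> V.span S"
  moreover have "V.span S \<subseteq> {v. br u v \<in> V.span S}"
    using assms by (intro V.span_minimal subspace_br_preimage) auto
  ultimately show "br u v \<in> V.span S" by blast
qed simp

lemma lie_subalgebra_normalizer:
  assumes I: "V.subspace I"
  shows "lie_subalgebra scale br {v. \<forall>r\<in>I. br v r \<in> I}"
  unfolding lie_subalgebra_def
proof (intro conjI ballI)
  show "V.subspace {v. \<forall>r\<in>I. br v r \<in> I}"
    unfolding V.subspace_def
    using V.subspace_0[OF I] V.subspace_add[OF I] V.subspace_scale[OF I]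
    by (simp add: br_add_left br_scale_left)
next
  fix v w
  assume v: "v \<in> {v. \<forall>r\<in>I. br v r \<in> I}" and w: "w \<in> {v. \<forall>r\<in>I. br v r \<in> I}"
  have "br (br v w) r \<in> I" if "r \<in> I" for r
    using br_derivation[of v w r] V.subspace_diff[OF I] v w that
    by (metis (mono_tags) add_diff_cancel_right' mem_Collect_eq)
  then show "br v w \<in> {v. \<forall>r\<in>I. br v r \<in> I}" by blast
qed

lemma linear_functionalI:
  assumes "\<And>u v. f (u + v) = f u + f v" and "\<And>c u. f (scale c u) = c * f u"
  shows "Vector_Spaces.linear scale (*) f"
  using assms
  by (simp add: Vector_Spaces.linear_iff V.vector_space_axioms vector_space_field_mult)

end

locale extremal_form_lie = lie_alg scale br
  for scale :: "'k::field \<Rightarrow> 'L::ab_group_add \<Rightarrow> 'L" and br +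
  fixes g :: "'L \<Rightarrow> 'L \<Rightarrow> 'k"
  assumes extremal_form: "extremal_form scale br g"
begin

lemma g_sym: "g u v = g v u"
  and g_add_left: "g (u + v) w = g u w + g v w"
  and g_scale_left: "g (scale c u) w = c * g u w"
  and extremal_ids_g: "extremal scale br a \<Longrightarrow> extremal_ids scale br a (g a)"
  using extremal_form unfolding extremal_form_def by blast+

lemma g_add_right: "g w (u + v) = g w u + g w v"
  by (simp only: g_sym[of w] g_add_left)

lemma g_scale_right: "g w (scale c u) = c * g w u"
  by (simp only: g_sym[of w] g_scale_left)

lemma linear_g: "Vector_Spaces.linear scale (*) (g a)"
  by (rule linear_functionalI) (simp_all add: g_add_right g_scale_right)

lemma g_zero_left [simp]: "g 0 w = 0"
  using g_scale_left[of 0 0 w] by simp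

lemma g_zero_right [simp]: "g w 0 = 0"
  using g_scale_right[of w 0 0] by simp

lemma g_minus_left: "g (- u) w = - g u w"
  using g_add_left[of u "- u" w] by (simp add: eq_neg_iff_add_eq_0 add.commute)

lemma g_minus_right: "g w (- u) = - g w u"
  using g_add_right[of w u "- u"] by (simp add: eq_neg_iff_add_eq_0 add.commute)

lemma g_diff_left: "g (u - v) w = g u w - g v w"
  using g_add_left[of u "- v" w] by (simp add: g_minus_left)

lemma g_diff_right: "g w (u - v) = g w u - g w v"
  using g_add_right[of w u "- v"] by (simp add: g_minus_right)

lemmas g_bilinear = g_add_left g_add_right g_scale_left g_scale_right
  g_minus_left g_minus_right g_diff_left g_diff_right

lemma extremal_nonzero: "extremal scale br a \<Longrightarrow> a \<noteq> 0"
  unfolding extremal_def by simp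

context
  fixes a assumes a: "extremal scale br a"
begin

lemma extremal_ad_square: "br a (br a u) = scale (2 * g a u) a"
  and extremal_bracket_ads:
    "br (br a u) (br a w) = scale (g a (br u w)) a + scale (g a w) (br a u) - scale (g a u) (br a w)"
  and extremal_ad_conj:
    "br a (br u (br a w)) = scale (g a (br u w)) a - scale (g a w) (br a u) - scale (g a u) (br a w)"
  using extremal_ids_g[OF a] unfolding extremal_ids_def by blast+

end

lemma extremal_uminus:
  assumes a: "extremal scale br a"
  shows "extremal scale br (- a)"
  unfolding extremal_def extremal_ids_def
proof (intro conjI exI allI)
  show "- a \<noteq> 0" using extremal_nonzero[OF a] by simp
  fix u w
  show "br (- a) (br (- a) u) = scale (2 * - g a u) (- a)"
    by (simp add: br_bilinear extremal_ad_square[OF a])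
  show "br (br (- a) u) (br (- a) w) =
      scale (- g a (br u w)) (- a) + scale (- g a w) (br (- a) u) - scale (- g a u) (br (- a) w)"
    by (simp add: br_bilinear extremal_bracket_ads[OF a])
  show "br (- a) (br u (br (- a) w)) =
      scale (- g a (br u w)) (- a) - scale (- g a w) (br (- a) u) - scale (- g a u) (br (- a) w)"
    by (simp add: br_bilinear extremal_ad_conj[OF a])
qed

lemma sandwich_pairing_char_two:
  assumes x: "extremal scale br x" and "sandwich br x" and gxy: "g x y = 1"
  shows "(2::'k) = 0"
proof -
  have "scale 2 x = 0"
    using extremal_ad_square[OF x, of y] \<open>sandwich br x\<close> gxy unfolding sandwich_def by simp
  then show ?thesis using extremal_nonzero[OF x] by simp
qed

lemma sandwich_ad_eq:
  assumes x: "extremal scale br x" and "sandwich br x" and gxy: "g x y = 1"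
  shows "br x w = scale (g x (br y w)) x - scale (g x w) (br x y)"
  using extremal_ad_conj[OF x, of y w] \<open>sandwich br x\<close> gxy unfolding sandwich_def
  by (simp add: algebra_simps)

lemma sandwich_partner_br_eq_0:
  assumes x: "extremal scale br x" and y: "extremal scale br y"
    and "sandwich br x" and gxy: "g x y = 1"
  shows "br y (br x y) = 0"
proof -
  have "br y (br y x) = 0"
    using sandwich_pairing_char_two[OF x \<open>sandwich br x\<close> gxy]
    by (simp only: extremal_ad_square[OF y] mult_zero_left V.scale_zero_left)
  then show ?thesis by (simp add: br_anticomm[of x y] br_minus_right)
qed

lemma sandwich_partner_ad_eq:
  assumes x: "extremal scale br x" and y: "extremal scale br y"
    and "sandwich br x" and gxy: "g x y = 1"
  shows "br y w =
    scale (g y (br x w)) y + scale (g y w) (br x y) + scale (g x (br y (br y w))) (br x y)"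
proof -
  have yx: "br y x = - br x y" by (rule br_anticomm)
  have "br y (br x (br y w)) = - scale (g x (br y (br y w))) (br x y)"
    by (subst sandwich_ad_eq[OF x \<open>sandwich br x\<close> gxy])
      (simp add: br_bilinear yx sandwich_partner_br_eq_0[OF assms])
  then show ?thesis
    using extremal_ad_conj[OF y, of x w] g_sym[of y x] gxy by (simp add: yx algebra_simps)
qed

lemma pure_extremal_g_nonzero:
  assumes t: "pure_extremal scale br t"
  shows "\<exists>r. g t r \<noteq> 0"
proof (rule ccontr)
  assume "\<not> (\<exists>r. g t r \<noteq> 0)"
  then have "sandwich br t"
    using t unfolding pure_extremal_def sandwich_def
    by (simp add: extremal_ad_square extremal_ad_conj)
  with t show False unfolding pure_extremal_def by simp
qed

lemma grading_U_swap: "grading_U g br y x = grading_U g br x y"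
  unfolding grading_U_def by (auto simp: br_anticomm[of x y] g_minus_right)

lemma L_plus1_eq_L_minus1_swap: "L_plus1 g br x y = L_minus1 g br y x"
  unfolding L_plus1_def L_minus1_def by (subst grading_U_swap) (rule refl)

end

locale simple_lie = lie_alg scale br
  for scale :: "'k::field \<Rightarrow> 'L::ab_group_add \<Rightarrow> 'L" and br +
  assumes simple: "simple_lie_algebra scale br"
begin

lemma nonabelian: "\<exists>a b. br a b \<noteq> 0"
  using simple by (simp add: simple_lie_algebra_def)

lemma lie_ideal_trivial: "lie_ideal scale br I \<Longrightarrow> I = {0} \<or> I = UNIV"
  using simple by (simp add: simple_lie_algebra_def)

lemma br_in_line_imp_zero:
  assumes "\<And>w. \<exists>c. br a w = scale c a"
  shows "a = 0"
proof (rule ccontr)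
  assume "a \<noteq> 0"
  have "lie_ideal scale br (V.span {a})"
  proof (rule lie_ideal_span)
    fix u s assume "s \<in> {a}"
    obtain c where "br a u = scale c a" using assms by blast
    then have "br u s = scale (- c) a" using \<open>s \<in> {a}\<close> by (simp add: br_anticomm[of u a])
    then show "br u s \<in> V.span {a}" by (metis V.span_base V.span_scale singletonI)
  qed
  then have "V.span {a} = UNIV"
    using lie_ideal_trivial V.span_base[of a "{a}"] \<open>a \<noteq> 0\<close> by auto
  then have "\<exists>k. p = scale k a" for p using V.span_singleton[of a] by auto
  then have "br p q = 0" for p q by (metis br_scale_left br_scale_right br_self V.scale_zero_right)
  then show False using nonabelian by blast
qed

lemma span_bracket_triple_eq_UNIV:
  assumes "x \<noteq> 0"
    and ad_x: "\<And>w. br x w \<in> V.span {x, y, br x y}"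
    and ad_y: "\<And>w. br y w \<in> V.span {x, y, br x y}"
  shows "V.span {x, y, br x y} = UNIV"
proof -
  let ?S = "V.span {x, y, br x y}"
  have "br u s \<in> ?S" if "s \<in> {x, y, br x y}" for u s
  proof -
    have ux: "br u x \<in> ?S" using V.span_neg[OF ad_x[of u]] by (simp add: br_anticomm[of u x])
    have uy: "br u y \<in> ?S" using V.span_neg[OF ad_y[of u]] by (simp add: br_anticomm[of u y])
    have "br u (br x y) = br x (br u y) - br y (br u x)"
      using br_derivation[of u x y] br_anticomm[of y "br u x"] by simp
    then have "br u (br x y) \<in> ?S" using V.span_diff ad_x ad_y by simp
    then show ?thesis using that ux uy by blast
  qed
  then have "lie_ideal scale br ?S" by (rule lie_ideal_span)
  moreover have "x \<in> ?S" by (simp add: V.span_base)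
  ultimately show ?thesis using lie_ideal_trivial \<open>x \<noteq> 0\<close> by blast
qed

lemma extremal_ids_eq_0_if_ad_in_line:
  assumes "c \<noteq> 0" and sq0: "\<And>w. br c (br c w) = 0" and ids: "extremal_ids scale br c f"
    and cu: "br c u = scale \<alpha> c"
  shows "f u = 0"
proof (rule ccontr)
  assume "f u \<noteq> 0"
  have "\<exists>k. br c w = scale k c" for w
  proof -
    have "br c (br u (br c w)) = br (br c u) (br c w) + br u (br c (br c w))"
      by (rule br_derivation)
    also have "\<dots> = 0" by (simp add: cu br_scale_left sq0 br_self)
    finally have "scale (f (br u w)) c - scale (f w) (br c u) - scale (f u) (br c w) = 0"
      using ids unfolding extremal_ids_def by simp
    then have "scale (f u) (br c w) = scale (f (br u w) - f w * \<alpha>) c"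
      by (simp add: cu V.scale_left_diff_distrib algebra_simps)
    then show ?thesis by (blast intro: V.eq_scale_divide[OF \<open>f u \<noteq> 0\<close>])
  qed
  then show False using br_in_line_imp_zero \<open>c \<noteq> 0\<close> by simp
qed

text \<open>Only interpreted locally: as a sublocale, its simp rules about (*) make the simplifier
  loop on the bracket computations in the locales below.\<close>

interpretation functionals: vector_space_pair scale "(*) :: 'k \<Rightarrow> 'k \<Rightarrow> 'k"
  by (intro vector_space_pair.intro V.vector_space_axioms vector_space_field_mult)

lemma extremal_ids_unique:
  assumes "c \<noteq> 0" and "\<not> sandwich br c"
    and ids1: "extremal_ids scale br c f1" and ids2: "extremal_ids scale br c f2"
    and lin1: "Vector_Spaces.linear scale (*) f1" and lin2: "Vector_Spaces.linear scale (*) f2"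
  shows "f1 = f2"
proof (rule ccontr)
  assume "f1 \<noteq> f2"
  define d where "d w = f1 w - f2 w" for w
  have lin_d: "Vector_Spaces.linear scale (*) d"
    unfolding d_def by (rule functionals.linear_compose_sub[OF lin1 lin2])
  obtain v where dv: "d v \<noteq> 0" using \<open>f1 \<noteq> f2\<close> by (auto simp: d_def fun_eq_iff)
  have sq1: "br c (br c u) = scale (2 * f1 u) c"
    and sq2: "br c (br c u) = scale (2 * f2 u) c" for u
    using ids1 ids2 unfolding extremal_ids_def by blast+
  have conj1: "br c (br u (br c w)) = scale (f1 (br u w)) c - scale (f1 w) (br c u) - scale (f1 u) (br c w)"
    and conj2: "br c (br u (br c w)) = scale (f2 (br u w)) c - scale (f2 w) (br c u) - scale (f2 u) (br c w)"
    for u w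
    using ids1 ids2 unfolding extremal_ids_def by blast+
  have "2 * f1 v = 2 * f2 v"
    using sq1[of v] sq2[of v] \<open>c \<noteq> 0\<close> by (metis V.scale_cancel_right)
  then have "(2::'k) = 0" using dv by (simp add: d_def)
  then have sq0: "br c (br c u) = 0" for u using sq1 by simp
  have conj_d: "scale (d (br u w)) c - scale (d w) (br c u) - scale (d u) (br c w) = 0" for u w
    using conj1[of u w] conj2[of u w] by (simp add: d_def V.scale_left_diff_distrib algebra_simps)
  have "f1 u = 0" if "d u = 0" for u
  proof -
    have "scale (d v) (br c u) = scale (d (br u v)) c" using conj_d[of u v] \<open>d u = 0\<close> by simp
    then have "br c u = scale (d (br u v) / d v) c" by (rule V.eq_scale_divide[OF dv])
    then show ?thesis by (rule extremal_ids_eq_0_if_ad_in_line[OF \<open>c \<noteq> 0\<close> sq0 ids1])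
  qed
  then obtain l where l: "\<And>w. f1 w = l * d w"
    by (rule V.linear_functional_proportional_on[OF V.subspace_UNIV lin_d lin1]) auto
  have "br c (br u (br c w)) =
      scale l (scale (d (br u w)) c - scale (d w) (br c u) - scale (d u) (br c w))" for u w
    by (simp add: conj1 l V.scale_right_diff_distrib)
  then have "sandwich br c" unfolding sandwich_def by (simp add: sq0 conj_d)
  with \<open>\<not> sandwich br c\<close> show False ..
qed

end

locale extremal_lie = simple_lie scale br + extremal_form_lie scale br g
  for scale :: "'k::field \<Rightarrow> 'L::ab_group_add \<Rightarrow> 'L" and br g
begin

context
  fixes a assumes a: "extremal scale br a"
begin

lemma g_eq_0_if_commuting:
  assumes "br a v = 0"
  shows "g a v = 0"
proof (rule ccontr)
  assume "g a v \<noteq> 0"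
  have "scale (g a v) (br a s) = scale (g a (br s v)) a" for s
    using extremal_ad_conj[OF a, of s v] assms by simp
  then have "\<exists>k. br a s = scale k a" for s
    by (blast intro: V.eq_scale_divide[OF \<open>g a v \<noteq> 0\<close>])
  then show False using br_in_line_imp_zero extremal_nonzero[OF a] by simp
qed

lemma g_self: "g a a = 0"
  by (rule g_eq_0_if_commuting) (rule br_self)

lemma g_ad_self: "g a (br a w) = 0"
proof -
  have "br a (br a (br a w)) = 0"
    by (simp add: extremal_ad_square[OF a] br_scale_right br_self)
  then have "scale (g a (br a w)) a = 0"
    using extremal_ad_conj[OF a, of a w] by (simp add: br_self g_self)
  then show ?thesis using extremal_nonzero[OF a] by simp
qed

lemma g_br_left_self: "g (br a w) a = 0"
  using g_ad_self by (simp add: g_sym[of "br a w" a])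

lemma g_br_right_self: "g (br w a) a = 0"
  using g_br_left_self by (simp add: br_anticomm[of w a] g_minus_left)

end

text \<open>Since (ad e)^2 = 2 g(e,-) e for extremal e, this is exp(ad e) without the division by 2.\<close>

definition exp_ad :: "'L \<Rightarrow> 'L \<Rightarrow> 'L"
  where "exp_ad e v = v + br e v + scale (g e v) e"

lemma exp_ad_zero [simp]: "exp_ad e 0 = 0"
  by (simp add: exp_ad_def)

lemma exp_ad_add: "exp_ad e (u + v) = exp_ad e u + exp_ad e v"
  and exp_ad_scale: "exp_ad e (scale c u) = scale c (exp_ad e u)"
  and exp_ad_diff: "exp_ad e (u - v) = exp_ad e u - exp_ad e v"
  by (simp_all add: exp_ad_def br_bilinear g_bilinear algebra_simps)

lemma exp_ad_uminus_exp_ad: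
  assumes e: "extremal scale br e"
  shows "exp_ad (- e) (exp_ad e v) = v"
proof -
  let ?x = "exp_ad e v"
  have g_x: "g e ?x = g e v"
    by (simp add: exp_ad_def g_bilinear g_self[OF e] g_ad_self[OF e])
  have br_x: "br e ?x = br e v + scale (2 * g e v) e"
    by (simp add: exp_ad_def br_add_right br_scale_right br_self extremal_ad_square[OF e])
  have "exp_ad (- e) ?x = ?x - br e ?x + scale (g e ?x) e"
    unfolding exp_ad_def by (simp add: br_minus_left g_minus_left)
  also have "\<dots> = v + br e v + scale (g e v) e - (br e v + scale (2 * g e v) e) + scale (g e v) e"
    unfolding g_x br_x by (simp only: exp_ad_def)
  also have "\<dots> = v"
    using V.scale_left_distrib[of "g e v" "g e v" e] by (simp only: mult_2) simp
  finally show ?thesis .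
qed

lemma exp_ad_exp_ad_uminus:
  assumes e: "extremal scale br e"
  shows "exp_ad e (exp_ad (- e) v) = v"
  using exp_ad_uminus_exp_ad[OF extremal_uminus[OF e]] by simp

lemma exp_ad_bracket:
  assumes e: "extremal scale br e"
  shows "br (exp_ad e u) (exp_ad e v) = exp_ad e (br u v)"
proof -
  have "br (br e u) (br e v) = scale (g e (br u v)) e + scale (g e v) (br e u) - scale (g e u) (br e v)"
    by (rule extremal_bracket_ads[OF e])
  moreover have "br (br e u) e = - scale (2 * g e u) e"
    by (simp add: br_anticomm[of "br e u" e] extremal_ad_square[OF e])
  moreover have "br e (br e v) = scale (2 * g e v) e"
    by (rule extremal_ad_square[OF e])
  moreover have "br u e = - br e u"
    by (rule br_anticomm)
  moreover have "br (br e u) v = br e (br u v) - br u (br e v)"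
    using br_derivation[of e u v] by (simp add: algebra_simps)
  ultimately show ?thesis
    unfolding exp_ad_def by (simp add: br_bilinear algebra_simps)
qed

lemma br_exp_ad_left:
  assumes e: "extremal scale br e"
  shows "br (exp_ad e u) v = exp_ad e (br u (exp_ad (- e) v))"
  by (metis exp_ad_bracket[OF e] exp_ad_exp_ad_uminus[OF e])

lemma extremal_ids_exp_ad:
  assumes a: "extremal scale br a" and e: "extremal scale br e"
  shows "extremal_ids scale br (exp_ad e a) (\<lambda>v. g a (exp_ad (- e) v))"
  unfolding extremal_ids_def
proof (intro conjI allI)
  fix u w
  let ?c = "exp_ad e a" and ?u = "exp_ad (- e) u" and ?w = "exp_ad (- e) w"
  have inner: "exp_ad (- e) (br ?c p) = br a (exp_ad (- e) p)" for p
    by (simp add: br_exp_ad_left[OF e] exp_ad_uminus_exp_ad[OF e])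
  have pull: "exp_ad (- e) (br p q) = br (exp_ad (- e) p) (exp_ad (- e) q)" for p q
    by (rule exp_ad_bracket[OF extremal_uminus[OF e], symmetric])
  note push = exp_ad_add exp_ad_diff exp_ad_scale exp_ad_bracket[OF e, symmetric] exp_ad_exp_ad_uminus[OF e]
  have "br ?c (br ?c u) = exp_ad e (br a (exp_ad (- e) (br ?c u)))"
    by (rule br_exp_ad_left[OF e])
  also have "\<dots> = exp_ad e (br a (br a ?u))"
    by (simp only: inner)
  finally have "br ?c (br ?c u) = exp_ad e (br a (br a ?u))" .
  then show "br ?c (br ?c u) = scale (2 * g a ?u) ?c"
    by (simp only: extremal_ad_square[OF a] exp_ad_scale)
  have "br (br ?c u) (br ?c w) = exp_ad e (br (br a ?u) (br a ?w))"
    by (simp only: br_exp_ad_left[OF e, of a] exp_ad_bracket[OF e])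
  then show "br (br ?c u) (br ?c w) =
      scale (g a (exp_ad (- e) (br u w))) ?c + scale (g a ?w) (br ?c u) - scale (g a ?u) (br ?c w)"
    by (simp only: extremal_bracket_ads[OF a] push pull)
  have "br ?c (br u (br ?c w)) = exp_ad e (br a (exp_ad (- e) (br u (br ?c w))))"
    by (rule br_exp_ad_left[OF e])
  also have "\<dots> = exp_ad e (br a (br ?u (br a ?w)))"
    by (simp only: pull[of u "br ?c w"] inner)
  finally have "br ?c (br u (br ?c w)) = exp_ad e (br a (br ?u (br a ?w)))" .
  then show "br ?c (br u (br ?c w)) =
      scale (g a (exp_ad (- e) (br u w))) ?c - scale (g a ?w) (br ?c u) - scale (g a ?u) (br ?c w)"
    by (simp only: extremal_ad_conj[OF a] push pull)
qed

lemma extremal_exp_ad: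
  assumes a: "extremal scale br a" and e: "extremal scale br e"
  shows "extremal scale br (exp_ad e a)"
proof -
  have "exp_ad e a \<noteq> 0" using exp_ad_uminus_exp_ad[OF e, of a] extremal_nonzero[OF a] by auto
  then show ?thesis unfolding extremal_def using extremal_ids_exp_ad[OF a e] by blast
qed

lemma sandwich_exp_adD:
  assumes e: "extremal scale br e" and "sandwich br (exp_ad e a)"
  shows "sandwich br a"
  unfolding sandwich_def
proof (intro conjI allI)
  fix u w
  have "br a (br a u) = exp_ad (- e) (br (exp_ad e a) (br (exp_ad e a) (exp_ad e u)))"
    by (simp add: exp_ad_bracket[OF e] exp_ad_uminus_exp_ad[OF e])
  then show "br a (br a u) = 0" using assms(2) unfolding sandwich_def by simp
  have "br a (br u (br a w)) =
      exp_ad (- e) (br (exp_ad e a) (br (exp_ad e u) (br (exp_ad e a) (exp_ad e w))))"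
    by (simp add: exp_ad_bracket[OF e] exp_ad_uminus_exp_ad[OF e])
  then show "br a (br u (br a w)) = 0" using assms(2) unfolding sandwich_def by simp
qed

lemma pure_extremal_exp_ad:
  assumes "pure_extremal scale br a" and "extremal scale br e"
  shows "pure_extremal scale br (exp_ad e a)"
  using assms extremal_exp_ad sandwich_exp_adD unfolding pure_extremal_def by blast

lemma g_invariant:
  assumes a: "pure_extremal scale br a" and e: "extremal scale br e"
  shows "g a (br e r) = - g (br e a) r"
proof -
  let ?c = "exp_ad e a"
  have "extremal scale br a" using a unfolding pure_extremal_def by simp
  have c: "extremal scale br ?c" "\<not> sandwich br ?c"
    using pure_extremal_exp_ad[OF a e] unfolding pure_extremal_def by simp_all
  have lin: "Vector_Spaces.linear scale (*) (\<lambda>v. g a (exp_ad (- e) v))"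
    by (rule linear_functionalI) (simp_all add: exp_ad_add exp_ad_scale g_add_right g_scale_right)
  have g_c: "g ?c = (\<lambda>v. g a (exp_ad (- e) v))"
    by (rule extremal_ids_unique[OF extremal_nonzero[OF c(1)] c(2) extremal_ids_g[OF c(1)]
          extremal_ids_exp_ad[OF \<open>extremal scale br a\<close> e] linear_g lin])
  have "g (br e a) r = g ?c r - g a r - g e a * g e r"
    by (simp add: exp_ad_def g_bilinear)
  also have "\<dots> = g a (exp_ad (- e) r) - g a r - g e a * g e r"
    by (simp add: g_c)
  also have "\<dots> = - g a (br e r)"
    by (simp add: exp_ad_def g_bilinear br_minus_left g_sym[of a e])
  finally show ?thesis by simp
qed

lemma g_br_antisym:
  assumes a: "pure_extremal scale br a" and b: "pure_extremal scale br b"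
  shows "g a (br b u) = - g b (br a u)"
proof -
  have "extremal scale br a" "extremal scale br b"
    using a b unfolding pure_extremal_def by simp_all
  then have "g a (br b u) = - g (br b a) u" and "g b (br a u) = - g (br a b) u"
    using g_invariant a b by blast+
  then show ?thesis by (simp add: br_anticomm[of b a] g_minus_left)
qed

lemma pure_extremal_if_g_eq_1:
  assumes x: "extremal scale br x" and y: "extremal scale br y" and gxy: "g x y = 1"
  shows "pure_extremal scale br x"
  unfolding pure_extremal_def
proof (intro conjI notI)
  show "extremal scale br x" by (fact x)
  assume sx: "sandwich br x"
  let ?h = "br x y"
  let ?S = "V.span {x, y, ?h}"
  note ad_x = sandwich_ad_eq[OF x sx gxy] and ad_y = sandwich_partner_ad_eq[OF x y sx gxy]
  have "?S = UNIV"
  proof (rule span_bracket_triple_eq_UNIV[OF extremal_nonzero[OF x]])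
    have base: "x \<in> ?S" "y \<in> ?S" "?h \<in> ?S" by (simp_all add: V.span_base)
    show "br x w \<in> ?S" for w
      by (subst ad_x[of w]) (simp add: base V.span_diff V.span_scale)
    show "br y w \<in> ?S" for w
      by (subst ad_y[of w]) (simp add: base V.span_add V.span_scale)
  qed
  moreover have "?S \<subseteq> {w. br ?h w \<in> {0}}"
    using sx sandwich_partner_br_eq_0[OF x y sx gxy] br_self[of ?h]
      br_anticomm[of x ?h] br_anticomm[of y ?h]
    unfolding sandwich_def
    by (intro V.span_minimal subspace_br_preimage V.subspace_single_0) auto
  ultimately have "br ?h w = scale 0 ?h" for w by auto
  then have "?h = 0" by (blast intro: br_in_line_imp_zero)
  then have "br x w = scale (g x (br y w)) x" for w using ad_x[of w] by simp
  then have "x = 0" by (blast intro: br_in_line_imp_zero)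
  then show False using extremal_nonzero[OF x] by simp
qed

end

locale extremal_generated = extremal_lie scale br g
  for scale :: "'k::field \<Rightarrow> 'L::ab_group_add \<Rightarrow> 'L" and br g +
  assumes generated: "lie_generated_by scale br {a. pure_extremal scale br a}"
begin

lemma lie_subalgebra_eq_UNIV:
  assumes "lie_subalgebra scale br S" and "\<And>a. pure_extremal scale br a \<Longrightarrow> a \<in> S"
  shows "S = UNIV"
  using assms generated unfolding lie_generated_by_def by blast

lemma ex_pure_extremal: "\<exists>t. pure_extremal scale br t"
proof (rule ccontr)
  assume "\<not> (\<exists>t. pure_extremal scale br t)"
  moreover have "lie_subalgebra scale br {0}" unfolding lie_subalgebra_def by simp
  ultimately have "{0} = (UNIV :: 'L set)" using lie_subalgebra_eq_UNIV by blast
  then show False using nonabelian by (metis UNIV_I br_zero_left singletonD)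
qed

definition pure_radical :: "'L set"
  where "pure_radical = {r. \<forall>t. pure_extremal scale br t \<longrightarrow> g t r = 0}"

lemma subspace_pure_radical: "V.subspace pure_radical"
  unfolding V.subspace_def pure_radical_def by (simp add: g_add_right g_scale_right)

lemma br_pure_radical:
  assumes e: "pure_extremal scale br e" and r: "r \<in> pure_radical"
  shows "br e r \<in> pure_radical"
  unfolding pure_radical_def
proof (intro CollectI allI impI)
  fix t assume t: "pure_extremal scale br t"
  have "extremal scale br e" using e unfolding pure_extremal_def by simp
  have r0: "g s r = 0" if "pure_extremal scale br s" for s
    using r that unfolding pure_radical_def by simp
  have "g t (br e r) = - g (br e t) r" by (rule g_invariant[OF t \<open>extremal scale br e\<close>])
  also have "\<dots> = - (g (exp_ad e t) r - g t r - g e t * g e r)"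
    by (simp add: exp_ad_def g_bilinear)
  also have "\<dots> = 0"
    using r0[OF pure_extremal_exp_ad[OF t \<open>extremal scale br e\<close>]] r0[OF t] r0[OF e] by simp
  finally show "g t (br e r) = 0" .
qed

lemma pure_radical_eq_0: "pure_radical = {0}"
proof -
  have "{v. \<forall>r\<in>pure_radical. br v r \<in> pure_radical} = UNIV"
    by (rule lie_subalgebra_eq_UNIV[OF lie_subalgebra_normalizer[OF subspace_pure_radical]])
      (simp add: br_pure_radical)
  then have "lie_ideal scale br pure_radical"
    unfolding lie_ideal_def using subspace_pure_radical by auto
  moreover have "pure_radical \<noteq> UNIV"
  proof -
    obtain t where t: "pure_extremal scale br t" using ex_pure_extremal by blast
    obtain q where "g t q \<noteq> 0" using pure_extremal_g_nonzero[OF t] by blast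
    then have "q \<notin> pure_radical" using t unfolding pure_radical_def by auto
    then show ?thesis by auto
  qed
  ultimately show ?thesis using lie_ideal_trivial by blast
qed

lemma eq_0_if_orthogonal_to_pure:
  assumes "\<And>t. pure_extremal scale br t \<Longrightarrow> g t r = 0"
  shows "r = 0"
  using assms pure_radical_eq_0 unfolding pure_radical_def by blast

lemma g_br_eq_multiple_if_central_in_L_minus1:
  assumes x: "extremal scale br x" and y: "extremal scale br y" and gxy: "g x y = 1"
    and u: "u \<in> grading_U g br x y"
    and central: "\<And>w. w \<in> grading_U g br x y \<Longrightarrow> br (br x u) (br x w) = 0"
  obtains \<gamma> where "\<And>w. g x (br w u) = \<gamma> * g (br x y) w"
proof -
  define h where "h = br x y"
  have U_iff: "w \<in> grading_U g br x y \<longleftrightarrow> g x w = 0 \<and> g y w = 0 \<and> g h w = 0" for w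
    unfolding grading_U_def h_def by (simp add: g_sym[of w])
  have ux: "g x u = 0" and "g h u = 0" using u U_iff by auto
  have lin: "Vector_Spaces.linear scale (*) (\<lambda>w. g x (br w u))"
    by (rule linear_functionalI) (simp_all add: br_add_left br_scale_left g_add_right g_scale_right)
  have vanish: "g x (br w u) = 0" if "g x w = 0" "g y w = 0" "g h w = 0" for w
  proof -
    have "scale (g x (br u w)) x = 0"
      using extremal_bracket_ads[OF x, of u w] central[of w] ux that U_iff by simp
    then show ?thesis using extremal_nonzero[OF x] by (simp add: br_anticomm[of w u] g_minus_right)
  qed
  obtain \<alpha> \<beta> \<gamma> where comb: "\<And>w. g x (br w u) = \<alpha> * g x w + \<beta> * g y w + \<gamma> * g h w"
    using V.linear_functional_in_span_of_three[OF linear_g[of x] linear_g[of y] linear_g[of h] lin vanish]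
    by blast
  have "\<beta> = 0"
    using comb[of x] g_ad_self[OF x, of u] g_self[OF x] gxy g_br_left_self[OF x, of y]
    by (simp add: h_def g_sym[of y x])
  moreover have "\<alpha> = 0"
  proof -
    have "g x (br y u) = - g (br y x) u"
      by (rule g_invariant[OF pure_extremal_if_g_eq_1[OF x y gxy] y])
    also have "\<dots> = 0" using \<open>g h u = 0\<close> by (simp add: h_def br_anticomm[of y x] g_minus_left)
    finally show ?thesis
      using comb[of y] gxy g_self[OF y] g_br_right_self[OF y, of x] \<open>\<beta> = 0\<close> by (simp add: h_def)
  qed
  ultimately have "g x (br w u) = \<gamma> * g h w" for w using comb by simp
  then show ?thesis unfolding h_def by (rule that)
qed

lemma br_eq_0_if_central_in_L_minus1:
  assumes x: "extremal scale br x" and y: "extremal scale br y" and gxy: "g x y = 1"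
    and u: "u \<in> grading_U g br x y"
    and central: "\<And>w. w \<in> grading_U g br x y \<Longrightarrow> br (br x u) (br x w) = 0"
  shows "br x u = 0"
proof -
  obtain \<gamma> where \<gamma>: "\<And>w. g x (br w u) = \<gamma> * g (br x y) w"
    using g_br_eq_multiple_if_central_in_L_minus1[OF assms] by blast
  have "g t (br x u + scale \<gamma> (br x y)) = 0" if t: "pure_extremal scale br t" for t
    using g_br_antisym[OF t pure_extremal_if_g_eq_1[OF x y gxy], of u]
    by (simp add: \<gamma> g_bilinear g_sym[of "br x y" t])
  then have "br x u + scale \<gamma> (br x y) = 0" by (rule eq_0_if_orthogonal_to_pure)
  then have "br x (u + scale \<gamma> y) = 0" by (simp add: br_add_right br_scale_right)
  then have "g x (u + scale \<gamma> y) = 0" by (rule g_eq_0_if_commuting[OF x])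
  moreover have "g x u = 0" using u unfolding grading_U_def by (simp add: g_sym[of u x])
  ultimately have "\<gamma> = 0" using gxy by (simp add: g_bilinear)
  with \<open>br x u + scale \<gamma> (br x y) = 0\<close> show ?thesis by simp
qed

lemma centre_part_L_minus1:
  assumes x: "extremal scale br x" and y: "extremal scale br y" and gxy: "g x y = 1"
  shows "centre_part br (L_minus1 g br x y) = {0}"
proof -
  have "z = 0" if "z \<in> centre_part br (L_minus1 g br x y)" for z
  proof -
    from that obtain u where u: "u \<in> grading_U g br x y" and z: "z = br x u"
      and central: "\<And>w. w \<in> grading_U g br x y \<Longrightarrow> br z (br x w) = 0"
      unfolding centre_part_def L_minus1_def by blast
    show ?thesis using br_eq_0_if_central_in_L_minus1[OF x y gxy u] central z by simp
  qed
  moreover have "0 \<in> grading_U g br x y" unfolding grading_U_def by simp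
  then have "0 \<in> centre_part br (L_minus1 g br x y)"
    unfolding centre_part_def L_minus1_def by (auto intro: image_eqI[of 0 _ 0])
  ultimately show ?thesis by blast
qed

end

theorem lemma2p11:
  fixes scale :: "'k::field \<Rightarrow> 'L::ab_group_add \<Rightarrow> 'L"
    and br :: "'L \<Rightarrow> 'L \<Rightarrow> 'L"
    and g :: "'L \<Rightarrow> 'L \<Rightarrow> 'k"
    and x y :: 'L
  assumes "simple_lie_algebra scale br"
    and "lie_generated_by scale br {a. pure_extremal scale br a}"
    and "extremal_form scale br g"
    and "extremal scale br x" and "extremal scale br y"
    and "g x y = 1"
  shows "centre_part br (L_minus1 g br x y) = {0} \<and> centre_part br (L_plus1 g br x y) = {0}"
proof -
  interpret extremal_generated scale br g
    using assms(1-3) by unfold_locales (simp_all add: simple_lie_algebra_def)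
  have "g y x = 1" using assms(6) g_sym by metis
  then show ?thesis
    using centre_part_L_minus1[OF assms(4-6)] centre_part_L_minus1[OF assms(5,4)]
    by (simp add: L_plus1_eq_L_minus1_swap)
qed

end
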